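(* Let $G$ be a finite group, $\mathcal H$ a finite-dimensional Hilbert space, $\rho$ a state on $\mathcal H$, $\epsilon\ge0$, and let $f:G\to\mathscr U(\mathcal H)$ be an $(\epsilon,\rho)$-homomorphism. Suppose $S\le G$ is a subgroup such that $f(sg)=f(s)f(g)$ for all $s\in S$, $g\in G$. Then $f|_S$ is a representation of $S$, and there exist a finite-dimensional Hilbert space $\mathcal K$, an isometry $V:\mathcal H\to\mathcal K$ and a representation $\phi:G\to\mathscr U(\mathcal K)$ such that $$\|Vf(g)-\phi(g)V\|_\rho^2\le\epsilon\quad\text{for all } g\in G,$$ and every irreducible component $\xi$ of $\phi$ satisfies $\widehat{f|_S}(\xi|_S)\neq0$.
   Context: $\mathscr U(\mathcal H)$ is the unitary group of $\mathcal H$. For a state $\rho$ on $\mathcal H$ and a linear map $T$ from $\mathcal H$ to some Hilbert space, $\|T\|_\rho=\sqrt{\mathrm{Tr}(T^*T\rho)}$. A function $f:G\to\mathscr U(\mathcal H)$ is an $(\epsilon,\rho)$-homomorphism if for every $g\in G$, $\frac1{|G|}\sum_{h\in G}\|f(h)f(g)-f(hg)\|_\rho^2\le\epsilon$. For a finite group $S$, a function $u:S\to\mathscr U(\mathcal H)$, and a unitary representation $\xi:S\to\mathscr U(\mathbb C^d)$, the Fourier transform is $\hat u(\xi)=\frac1{|S|}\sum_{s\in S}u(s)\otimes\overline{\xi(s)}$ on $\mathcal H\otimes\mathbb C^d$, where $\overline{\xi(s)}$ is the entrywise complex conjugate in the standard basis. An irreducible component of a representation $\phi$ of $G$ is an irreducible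 representation appearing in a decomposition of $\phi$ (up to unitary equivalence) as a direct sum of irreducibles. *)

theory Defs
  imports "HOL-Algebra.Group" "Jordan_Normal_Form.Schur_Decomposition"
begin

text \<open>Finite-dimensional Hilbert spaces are modelled as \<open>\<complex>^n\<close>; linear maps
  \<open>\<complex>^n \<rightarrow> \<complex>^m\<close> as complex m x n matrices (Jordan_Normal_Form).\<close>

definition mtrace :: "complex mat \<Rightarrow> complex" where
  "mtrace A = (\<Sum>i<dim_row A. A $$ (i,i))"

definition unitary_mat :: "nat \<Rightarrow> complex mat \<Rightarrow> bool" where
  "unitary_mat n U \<longleftrightarrow> U \<in> carrier_mat n n \<and> mat_adjoint U * U = 1\<^sub>m n \<and> U * mat_adjoint U = 1\<^sub>m n"

definition isometry_mat :: "nat \<Rightarrow> nat \<Rightarrow> complex mat \<Rightarrow> bool" where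
  "isometry_mat m n V \<longleftrightarrow> V \<in> carrier_mat m n \<and> mat_adjoint V * V = 1\<^sub>m n"

definition is_state :: "nat \<Rightarrow> complex mat \<Rightarrow> bool" where
  "is_state n \<rho> \<longleftrightarrow> \<rho> \<in> carrier_mat n n \<and> mat_adjoint \<rho> = \<rho> \<and>
     (\<forall>v \<in> carrier_vec n. Im (conjugate v \<bullet> (\<rho> *\<^sub>v v)) = 0 \<and> 0 \<le> Re (conjugate v \<bullet> (\<rho> *\<^sub>v v))) \<and>
     mtrace \<rho> = 1"

definition rho_norm :: "complex mat \<Rightarrow> complex mat \<Rightarrow> real" where
  "rho_norm \<rho> T = sqrt (Re (mtrace (mat_adjoint T * T * \<rho>)))"

definition approx_hom :: "('g, 'b) monoid_scheme \<Rightarrow> nat \<Rightarrow> complex mat \<Rightarrow> real \<Rightarrow> ('g \<Rightarrow> complex mat) \<Rightarrow> bool" where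
  "approx_hom G n \<rho> \<epsilon> f \<longleftrightarrow> (\<forall>g \<in> carrier G. unitary_mat n (f g)) \<and>
     (\<forall>g \<in> carrier G. (1 / real (card (carrier G))) *
        (\<Sum>h \<in> carrier G. (rho_norm \<rho> (f h * f g - f (h \<otimes>\<^bsub>G\<^esub> g)))\<^sup>2) \<le> \<epsilon>)"

definition unitary_rep :: "('g, 'b) monoid_scheme \<Rightarrow> nat \<Rightarrow> ('g \<Rightarrow> complex mat) \<Rightarrow> bool" where
  "unitary_rep G d \<phi> \<longleftrightarrow> (\<forall>g \<in> carrier G. unitary_mat d (\<phi> g)) \<and>
     (\<forall>g \<in> carrier G. \<forall>h \<in> carrier G. \<phi> (g \<otimes>\<^bsub>G\<^esub> h) = \<phi> g * \<phi> h)"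

definition invariant_subspace :: "('g, 'b) monoid_scheme \<Rightarrow> nat \<Rightarrow> ('g \<Rightarrow> complex mat) \<Rightarrow> complex vec set \<Rightarrow> bool" where
  "invariant_subspace G d \<xi> W \<longleftrightarrow> W \<subseteq> carrier_vec d \<and> 0\<^sub>v d \<in> W \<and>
     (\<forall>v \<in> W. \<forall>w \<in> W. v + w \<in> W) \<and> (\<forall>c. \<forall>v \<in> W. c \<cdot>\<^sub>v v \<in> W) \<and>
     (\<forall>g \<in> carrier G. \<forall>v \<in> W. \<xi> g *\<^sub>v v \<in> W)"

definition irreducible_rep :: "('g, 'b) monoid_scheme \<Rightarrow> nat \<Rightarrow> ('g \<Rightarrow> complex mat) \<Rightarrow> bool" where
  "irreducible_rep G d \<xi> \<longleftrightarrow> unitary_rep G d \<xi> \<and> 0 < d \<and>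
     (\<forall>W. invariant_subspace G d \<xi> W \<longrightarrow> W = {0\<^sub>v d} \<or> W = carrier_vec d)"

fun block_diag :: "complex mat list \<Rightarrow> complex mat" where
  "block_diag [] = 0\<^sub>m 0 0"
| "block_diag (A # As) = four_block_mat A (0\<^sub>m (dim_row A) (dim_col (block_diag As)))
      (0\<^sub>m (dim_row (block_diag As)) (dim_col A)) (block_diag As)"

definition irr_component :: "('g, 'b) monoid_scheme \<Rightarrow> nat \<Rightarrow> ('g \<Rightarrow> complex mat) \<Rightarrow> nat \<Rightarrow> ('g \<Rightarrow> complex mat) \<Rightarrow> bool" where
  "irr_component G m \<phi> d \<xi> \<longleftrightarrow>
     (\<exists>(comps :: (nat \<times> ('g \<Rightarrow> complex mat)) list) U.
        (\<forall>(k, \<eta>) \<in> set comps. irreducible_rep G k \<eta>) \<and>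
        unitary_mat m U \<and>
        (\<forall>g \<in> carrier G. U * \<phi> g * mat_adjoint U = block_diag (map (\<lambda>(k, \<eta>). \<eta> g) comps)) \<and>
        (d, \<xi>) \<in> set comps)"

definition kron :: "complex mat \<Rightarrow> complex mat \<Rightarrow> complex mat" where
  "kron A B = mat (dim_row A * dim_row B) (dim_col A * dim_col B)
     (\<lambda>(i,j). A $$ (i div dim_row B, j div dim_col B) * B $$ (i mod dim_row B, j mod dim_col B))"

definition fourier :: "'g set \<Rightarrow> nat \<Rightarrow> ('g \<Rightarrow> complex mat) \<Rightarrow> nat \<Rightarrow> ('g \<Rightarrow> complex mat) \<Rightarrow> complex mat" where
  "fourier S n u d \<xi> = mat (n * d) (n * d)
     (\<lambda>ij. (\<Sum>s \<in> S. kron (u s) (map_mat cnj (\<xi> s)) $$ ij) / of_nat (card S))"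

end

theory Submission
  imports Defs
begin

text \<open>Take for \<open>\<phi>\<close> the representation of \<open>G\<close> induced from \<open>f|\<^sub>S\<close>: if \<open>t\<^sub>1, \<dots>, t\<^sub>k\<close>
  represent the right cosets of \<open>S\<close>, then \<open>\<phi>(g)\<close> acts on \<open>(\<complex>^n)^k\<close> by sending block \<open>a\<close> to
  block \<open>b\<close>, where \<open>S t\<^sub>a g = S t\<^sub>b\<close>, twisted by \<open>f(t\<^sub>a g t\<^sub>b\<^sup>-\<^sup>1)\<close>; and let
  \<open>V x = k\<^sup>-\<^sup>1\<^sup>/\<^sup>2 (f(t\<^sub>a) x)\<^sub>a\<close>. Block \<open>a\<close> of \<open>V f(g) - \<phi>(g) V\<close> is then
  \<open>k\<^sup>-\<^sup>1\<^sup>/\<^sup>2 (f(t\<^sub>a) f(g) - f(t\<^sub>a g))\<close>, and since \<open>f(s h) = f(s) f(h)\<close> for \<open>s \<in> S\<close>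
  with \<open>f(s)\<close> unitary, \<open>\<parallel>f(h) f(g) - f(h g)\<parallel>\<^sub>\<rho>\<close> only depends on the coset \<open>S h\<close>.
  Hence \<open>\<parallel>V f(g) - \<phi>(g) V\<parallel>\<^sub>\<rho>\<^sup>2\<close> is the average of this defect over \<open>G\<close>, at most \<open>\<epsilon>\<close>.

  An irreducible component \<open>\<xi>\<close> of \<open>\<phi>\<close> gives a nonzero intertwiner from \<open>\<xi>\<close> to \<open>\<phi>\<close>;
  by Frobenius reciprocity its block at the trivial coset is a nonzero \<open>A\<close> with
  \<open>f(s) A = A \<xi>(s)\<close> for \<open>s \<in> S\<close>. Then \<open>\<hat>f(\<xi>|\<^sub>S)\<close> fixes the vectorisation of \<open>A\<close>,
  so it is nonzero.\<close>

lemma dim_mat_adjoint[simp]: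
  "dim_row (mat_adjoint A) = dim_col A" "dim_col (mat_adjoint A) = dim_row A"
  by (auto simp: mat_adjoint_def)

lemma index_mat_adjoint[simp]:
  "i < dim_col A \<Longrightarrow> j < dim_row A \<Longrightarrow> mat_adjoint (A::complex mat) $$ (i,j) = cnj (A $$ (j,i))"
  by (auto simp: mat_adjoint_def mat_of_rows_index)

lemma mat_adjoint_carrier_mat[simp]: "A \<in> carrier_mat a b \<Longrightarrow> mat_adjoint A \<in> carrier_mat b a"
  by auto

lemma index_mult_mat_sum: "i < dim_row A \<Longrightarrow> j < dim_col B \<Longrightarrow> dim_col A = dim_row B \<Longrightarrow>
  (A * B) $$ (i,j) = (\<Sum>l<dim_col A. A $$ (i,l) * B $$ (l,j))"
  by (auto simp: scalar_prod_def lessThan_atLeast0 intro!: sum.cong)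

declare index_mult_mat(1)[simp del]

lemma sum_lessThan_mult_split: "(\<Sum>l<k*n. F l) = (\<Sum>b<k. \<Sum>c<n. F (b*n+c::nat))"
proof -
  have "(\<Sum>l<k*n. F l) = (\<Sum>b<k. sum F {b*n..<b*n+n})" by (simp add: sum.nat_group)
  also have "\<dots> = (\<Sum>b<k. \<Sum>c<n. F (b*n+c))"
  proof (rule sum.cong[OF refl])
    fix b
    have "sum F {b*n..<b*n+n} = sum F {0+b*n..<n+b*n}" by (simp add: add.commute)
    also have "\<dots> = (\<Sum>c\<in>{0..<n}. F (c + b*n))" by (rule sum.shift_bounds_nat_ivl)
    also have "\<dots> = (\<Sum>c<n. F (b*n+c))" by (simp add: lessThan_atLeast0 add.commute)
    finally show "sum F {b*n..<b*n+n} = (\<Sum>c<n. F (b*n+c))" .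
  qed
  finally show ?thesis .
qed

lemma block_index_less: "b < k \<Longrightarrow> c < (n::nat) \<Longrightarrow> b*n+c < k*n"
proof -
  assume "b < k" "c < n"
  then have "Suc b * n \<le> k * n" by (intro mult_le_mono1) simp
  then show ?thesis using \<open>c < n\<close> by simp
qed

lemma div_less_of_less_mult: "i < k*n \<Longrightarrow> i div n < (k::nat)"
  by (simp add: less_mult_imp_div_less)

lemma mod_less_of_less_mult: "i < k*n \<Longrightarrow> i mod n < (n::nat)"
  by (cases "n = 0") auto

lemma mat_adjoint_mult:
  assumes "A \<in> carrier_mat a b" "B \<in> carrier_mat b c"
  shows "mat_adjoint (A * (B::complex mat)) = mat_adjoint B * mat_adjoint A"
proof (rule eq_matI)
  fix i j assume "i < dim_row (mat_adjoint B * mat_adjoint A)" "j < dim_col (mat_adjoint B * mat_adjoint A)"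
  then show "mat_adjoint (A * B) $$ (i, j) = (mat_adjoint B * mat_adjoint A) $$ (i, j)"
    using assms by (simp add: index_mult_mat_sum cnj_sum mult.commute)
qed (use assms in auto)

lemma mat_adjoint_smult_mult_smult:
  "mat_adjoint (c \<cdot>\<^sub>m X) * (c \<cdot>\<^sub>m X) = (cnj c * c) \<cdot>\<^sub>m (mat_adjoint X * (X::complex mat))"
  by (rule eq_matI) (auto simp: index_mult_mat_sum sum_distrib_left mult_ac)

lemma smult_minus_distrib_mat:
  "A \<in> carrier_mat a b \<Longrightarrow> B \<in> carrier_mat a b \<Longrightarrow> c \<cdot>\<^sub>m A - c \<cdot>\<^sub>m B = c \<cdot>\<^sub>m (A - B :: complex mat)"
  by (rule eq_matI) (auto simp: algebra_simps)

lemma unitary_mat_cancel_left: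
  assumes "unitary_mat n U" "X \<in> carrier_mat n w"
  shows "mat_adjoint U * (U * X) = X"
  using assms assoc_mult_mat[of "mat_adjoint U" n n U n X w] by (simp add: unitary_mat_def)

lemma mtrace_smult_mult:
  "Q \<in> carrier_mat w w \<Longrightarrow> \<rho> \<in> carrier_mat w w \<Longrightarrow> mtrace ((d \<cdot>\<^sub>m Q) * \<rho>) = d * mtrace (Q * \<rho>)"
  by (simp add: mtrace_def sum_distrib_left mult_smult_assoc_mat)

lemma mtrace_sum_mult:
  assumes "\<And>a. a \<in> A \<Longrightarrow> Q a \<in> carrier_mat w w" "\<rho> \<in> carrier_mat w w"
  shows "mtrace (mat w w (\<lambda>(i,j). \<Sum>a\<in>A. Q a $$ (i,j)) * \<rho>) = (\<Sum>a\<in>A. mtrace (Q a * \<rho>))"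
proof -
  have "mtrace (mat w w (\<lambda>(i,j). \<Sum>a\<in>A. Q a $$ (i,j)) * \<rho>) =
     (\<Sum>i<w. \<Sum>l<w. \<Sum>a\<in>A. Q a $$ (i,l) * \<rho> $$ (l,i))"
    using assms by (simp add: mtrace_def index_mult_mat_sum sum_distrib_right)
  also have "\<dots> = (\<Sum>a\<in>A. \<Sum>i<w. \<Sum>l<w. Q a $$ (i,l) * \<rho> $$ (l,i))"
    by (simp add: sum.swap[of _ _ A])
  also have "\<dots> = (\<Sum>a\<in>A. mtrace (Q a * \<rho>))"
    using assms by (intro sum.cong refl) (force simp: mtrace_def index_mult_mat_sum)
  finally show ?thesis .
qed

lemma power2_sqrt_abs: "(sqrt x)\<^sup>2 = \<bar>x\<bar>"
proof (cases "x \<ge> 0")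
  case False
  then have "sqrt x = - sqrt (-x)" using real_sqrt_minus[of "-x"] by simp
  then show ?thesis using False by simp
qed simp

lemma rho_norm_power2: "(rho_norm \<rho> T)\<^sup>2 = \<bar>Re (mtrace (mat_adjoint T * T * \<rho>))\<bar>"
  unfolding rho_norm_def by (rule power2_sqrt_abs)

lemma rho_norm_unitary_mult:
  assumes "unitary_mat n U" "X \<in> carrier_mat n w"
  shows "rho_norm \<rho> (U * X) = rho_norm \<rho> X"
proof -
  have U: "U \<in> carrier_mat n n" using assms(1) by (simp add: unitary_mat_def)
  have "mat_adjoint (U * X) * (U * X) = mat_adjoint X * (mat_adjoint U * (U * X))"
    using mat_adjoint_mult[OF U assms(2)] U assms(2) by (simp add: assoc_mult_mat[of _ w n _ n _ w])
  then show ?thesis using unitary_mat_cancel_left[OF assms] unfolding rho_norm_def by simp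
qed

section \<open>Block matrices\<close>

text \<open>Matrices of \<open>k\<close> block rows of height \<open>n\<close>: \<open>block_monomial k n p M\<close> has the single
  nonzero block \<open>M a\<close> at block position \<open>(a, p a)\<close>, and \<open>block_column k n w v\<close>
  stacks the \<open>n \<times> w\<close> blocks \<open>v 0, \<dots>, v (k - 1)\<close>.\<close>

definition block_monomial :: "nat \<Rightarrow> nat \<Rightarrow> (nat \<Rightarrow> nat) \<Rightarrow> (nat \<Rightarrow> complex mat) \<Rightarrow> complex mat" where
  "block_monomial k n p M = mat (k*n) (k*n)
     (\<lambda>(i,j). if j div n = p (i div n) then M (i div n) $$ (i mod n, j mod n) else 0)"

definition block_column :: "nat \<Rightarrow> nat \<Rightarrow> nat \<Rightarrow> (nat \<Rightarrow> complex mat) \<Rightarrow> complex mat" where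
  "block_column k n w v = mat (k*n) w (\<lambda>(i,j). v (i div n) $$ (i mod n, j))"

lemma block_monomial_carrier[simp]:
  "dim_row (block_monomial k n p M) = k*n" "dim_col (block_monomial k n p M) = k*n"
  "block_monomial k n p M \<in> carrier_mat (k*n) (k*n)"
  by (auto simp: block_monomial_def)

lemma block_column_carrier[simp]:
  "dim_row (block_column k n w v) = k*n" "dim_col (block_column k n w v) = w"
  "block_column k n w v \<in> carrier_mat (k*n) w"
  by (auto simp: block_column_def)

lemma block_monomial_cong:
  "(\<And>a. a < k \<Longrightarrow> p a = p' a) \<Longrightarrow> (\<And>a. a < k \<Longrightarrow> M a = M' a) \<Longrightarrow>
    block_monomial k n p M = block_monomial k n p' M'"
  by (rule eq_matI) (auto simp: block_monomial_def div_less_of_less_mult)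

lemma block_column_cong:
  "(\<And>a. a < k \<Longrightarrow> v a = v' a) \<Longrightarrow> block_column k n w v = block_column k n w v'"
  by (rule eq_matI) (auto simp: block_column_def div_less_of_less_mult)

lemma index_block_monomial_mult:
  assumes "dim_row X = k*n" "i < k*n" "j < dim_col X" "p (i div n) < k"
    "M (i div n) \<in> carrier_mat n n"
  shows "(block_monomial k n p M * X) $$ (i,j) =
    (\<Sum>c<n. M (i div n) $$ (i mod n, c) * X $$ (p (i div n) * n + c, j))"
proof -
  have "(block_monomial k n p M * X) $$ (i,j) =
      (\<Sum>b<k. \<Sum>c<n. block_monomial k n p M $$ (i,b*n+c) * X $$ (b*n+c,j))"
    using assms by (simp add: index_mult_mat_sum sum_lessThan_mult_split)
  also have "\<dots> = (\<Sum>b<k. if b = p (i div n)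
      then (\<Sum>c<n. M (i div n) $$ (i mod n, c) * X $$ (p (i div n) * n + c, j)) else 0)"
    using assms(2) by (intro sum.cong refl) (auto simp: block_monomial_def block_index_less)
  finally show ?thesis using assms(4) by simp
qed

lemma block_monomial_mult:
  assumes "\<And>a. a < k \<Longrightarrow> p a < k" "\<And>a. a < k \<Longrightarrow> q a < k"
    "\<And>a. a < k \<Longrightarrow> M a \<in> carrier_mat n n" "\<And>a. a < k \<Longrightarrow> N a \<in> carrier_mat n n"
  shows "block_monomial k n p M * block_monomial k n q N =
    block_monomial k n (\<lambda>a. q (p a)) (\<lambda>a. M a * N (p a))"
proof (rule eq_matI)
  fix i j assume "i < dim_row (block_monomial k n (\<lambda>a. q (p a)) (\<lambda>a. M a * N (p a)))"
     "j < dim_col (block_monomial k n (\<lambda>a. q (p a)) (\<lambda>a. M a * N (p a)))"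
  then have ij: "i < k*n" "j < k*n" by auto
  have a: "i div n < k" "i mod n < n" "j mod n < n"
    using ij div_less_of_less_mult mod_less_of_less_mult by auto
  have pa: "p (i div n) < k" using assms(1) a by auto
  have "(block_monomial k n p M * block_monomial k n q N) $$ (i,j) =
     (\<Sum>c<n. M (i div n) $$ (i mod n, c) * block_monomial k n q N $$ (p (i div n) * n + c, j))"
    using ij a pa assms by (intro index_block_monomial_mult) auto
  also have "\<dots> = (\<Sum>c<n. M (i div n) $$ (i mod n, c) *
      (if j div n = q (p (i div n)) then N (p (i div n)) $$ (c, j mod n) else 0))"
    using ij pa by (intro sum.cong refl) (simp add: block_monomial_def block_index_less)
  also have "\<dots> = block_monomial k n (\<lambda>a. q (p a)) (\<lambda>a. M a * N (p a)) $$ (i,j)"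
    using assms(3)[OF a(1)] assms(4)[OF pa] a ij
    by (auto simp: index_mult_mat_sum block_monomial_def)
  finally show "(block_monomial k n p M * block_monomial k n q N) $$ (i,j) =
      block_monomial k n (\<lambda>a. q (p a)) (\<lambda>a. M a * N (p a)) $$ (i,j)" .
qed auto

lemma block_monomial_mult_block_column:
  assumes "\<And>a. a < k \<Longrightarrow> p a < k"
    "\<And>a. a < k \<Longrightarrow> M a \<in> carrier_mat n n" "\<And>a. a < k \<Longrightarrow> v a \<in> carrier_mat n w"
  shows "block_monomial k n p M * block_column k n w v = block_column k n w (\<lambda>a. M a * v (p a))"
proof (rule eq_matI)
  fix i j assume "i < dim_row (block_column k n w (\<lambda>a. M a * v (p a)))"
    "j < dim_col (block_column k n w (\<lambda>a. M a * v (p a)))"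
  then have ij: "i < k*n" "j < w" by auto
  have a: "i div n < k" "i mod n < n" using ij div_less_of_less_mult mod_less_of_less_mult by auto
  have pa: "p (i div n) < k" using assms(1) a by auto
  have "(block_monomial k n p M * block_column k n w v) $$ (i,j) =
     (\<Sum>c<n. M (i div n) $$ (i mod n, c) * block_column k n w v $$ (p (i div n) * n + c, j))"
    using ij a pa assms by (intro index_block_monomial_mult) auto
  also have "\<dots> = (\<Sum>c<n. M (i div n) $$ (i mod n, c) * v (p (i div n)) $$ (c, j))"
    using ij pa by (intro sum.cong refl) (simp add: block_column_def block_index_less)
  also have "\<dots> = block_column k n w (\<lambda>a. M a * v (p a)) $$ (i,j)"
    using ij a pa assms(2)[OF a(1)] assms(3)[OF pa]
    by (auto simp: block_column_def index_mult_mat_sum)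
  finally show "(block_monomial k n p M * block_column k n w v) $$ (i,j) =
      block_column k n w (\<lambda>a. M a * v (p a)) $$ (i,j)" .
qed auto

lemma block_monomial_id: "block_monomial k n (\<lambda>a. a) (\<lambda>a. 1\<^sub>m n) = 1\<^sub>m (k*n)"
proof (rule eq_matI)
  fix i j assume "i < dim_row (1\<^sub>m (k*n))" "j < dim_col (1\<^sub>m (k*n))"
  then have ij: "i < k*n" "j < k*n" by auto
  have "(i = j) = (i div n = j div n \<and> i mod n = j mod n)"
    by (metis div_mult_mod_eq)
  then show "block_monomial k n (\<lambda>a. a) (\<lambda>a. 1\<^sub>m n) $$ (i, j) = 1\<^sub>m (k * n) $$ (i, j)"
    using ij mod_less_of_less_mult[OF ij(1)] mod_less_of_less_mult[OF ij(2)]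
    by (auto simp: block_monomial_def)
qed auto

lemma block_column_mult:
  assumes "\<And>a. a < k \<Longrightarrow> v a \<in> carrier_mat n w" "B \<in> carrier_mat w w'"
  shows "block_column k n w v * B = block_column k n w' (\<lambda>a. v a * B)"
proof (rule eq_matI)
  fix i j assume "i < dim_row (block_column k n w' (\<lambda>a. v a * B))"
    "j < dim_col (block_column k n w' (\<lambda>a. v a * B))"
  then have ij: "i < k*n" "j < w'" by auto
  have a: "i div n < k" "i mod n < n" using ij div_less_of_less_mult mod_less_of_less_mult by auto
  show "(block_column k n w v * B) $$ (i,j) = block_column k n w' (\<lambda>a. v a * B) $$ (i,j)"
    using ij a assms(1)[OF a(1)] assms(2) by (auto simp: block_column_def index_mult_mat_sum)
qed (use assms in auto)

lemma block_column_minus: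
  assumes "\<And>a. a < k \<Longrightarrow> v a \<in> carrier_mat n w" "\<And>a. a < k \<Longrightarrow> v' a \<in> carrier_mat n w"
  shows "block_column k n w v - block_column k n w v' = block_column k n w (\<lambda>a. v a - v' a)"
proof (rule eq_matI)
  fix i j assume "i < dim_row (block_column k n w (\<lambda>a. v a - v' a))"
    "j < dim_col (block_column k n w (\<lambda>a. v a - v' a))"
  then have ij: "i < k*n" "j < w" by auto
  have a: "i div n < k" "i mod n < n" using ij div_less_of_less_mult mod_less_of_less_mult by auto
  show "(block_column k n w v - block_column k n w v') $$ (i,j) =
      block_column k n w (\<lambda>a. v a - v' a) $$ (i,j)"
    using ij a assms(1)[OF a(1)] assms(2)[OF a(1)] by (auto simp: block_column_def)
qed auto

lemma mat_adjoint_block_column_mult: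
  assumes "\<And>a. a < k \<Longrightarrow> v a \<in> carrier_mat n w"
  shows "mat_adjoint (block_column k n w v) * block_column k n w v =
    mat w w (\<lambda>(i,j). \<Sum>a<k. (mat_adjoint (v a) * v a) $$ (i,j))"
proof (rule eq_matI)
  fix i j assume "i < dim_row (mat w w (\<lambda>(i,j). \<Sum>a<k. (mat_adjoint (v a) * v a) $$ (i,j)))"
    "j < dim_col (mat w w (\<lambda>(i,j). \<Sum>a<k. (mat_adjoint (v a) * v a) $$ (i,j)))"
  then have ij: "i < w" "j < w" by auto
  let ?C = "block_column k n w v"
  have "(mat_adjoint ?C * ?C) $$ (i,j) =
      (\<Sum>b<k. \<Sum>c<n. cnj (?C $$ (b*n+c,i)) * ?C $$ (b*n+c,j))"
    using ij by (simp add: index_mult_mat_sum sum_lessThan_mult_split)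
  also have "\<dots> = (\<Sum>b<k. \<Sum>c<n. cnj (v b $$ (c,i)) * v b $$ (c,j))"
    using ij by (intro sum.cong refl) (auto simp: block_column_def block_index_less)
  also have "\<dots> = (\<Sum>b<k. (mat_adjoint (v b) * v b) $$ (i,j))"
  proof (intro sum.cong refl)
    fix b assume "b \<in> {..<k}"
    then show "(\<Sum>c<n. cnj (v b $$ (c,i)) * v b $$ (c,j)) = (mat_adjoint (v b) * v b) $$ (i,j)"
      using ij assms[of b] by (auto simp: index_mult_mat_sum)
  qed
  finally show "(mat_adjoint ?C * ?C) $$ (i,j) =
     mat w w (\<lambda>(i,j). \<Sum>a<k. (mat_adjoint (v a) * v a) $$ (i,j)) $$ (i,j)" using ij by simp
qed auto

lemma block_column_blocks:
  assumes "W \<in> carrier_mat (k*n) w"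
  shows "W = block_column k n w (\<lambda>a. mat n w (\<lambda>(i,j). W $$ (a*n+i, j)))"
proof (rule eq_matI)
  fix i j assume "i < dim_row (block_column k n w (\<lambda>a. mat n w (\<lambda>(i,j). W $$ (a*n+i, j))))"
    "j < dim_col (block_column k n w (\<lambda>a. mat n w (\<lambda>(i,j). W $$ (a*n+i, j))))"
  then have ij: "i < k*n" "j < w" by auto
  have "i div n * n + i mod n = i" by simp
  then show "W $$ (i,j) = block_column k n w (\<lambda>a. mat n w (\<lambda>(i,j). W $$ (a*n+i, j))) $$ (i,j)"
    using ij mod_less_of_less_mult[OF ij(1)] by (simp add: block_column_def)
qed (use assms in auto)

lemma block_column_inj:
  assumes "block_column k n w v = block_column k n w v'" "a < k"
    "v a \<in> carrier_mat n w" "v' a \<in> carrier_mat n w"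
  shows "v a = v' a"
proof (rule eq_matI)
  fix i j assume "i < dim_row (v' a)" "j < dim_col (v' a)"
  then have ij: "i < n" "j < w" using assms by auto
  have "block_column k n w v $$ (a*n+i, j) = block_column k n w v' $$ (a*n+i, j)"
    using assms by simp
  then show "v a $$ (i,j) = v' a $$ (i,j)"
    using ij assms(2) by (simp add: block_column_def block_index_less)
qed (use assms in auto)

lemma block_column_zero: "block_column k n w (\<lambda>a. 0\<^sub>m n w) = 0\<^sub>m (k*n) w"
  by (rule eq_matI) (auto simp: block_column_def mod_less_of_less_mult)

section \<open>Right coset representatives\<close>

text \<open>Representing \<open>S\<close> itself by \<open>\<one>\<close> makes the induced representation restrict to \<open>f|\<^sub>S\<close>
  on the block of the trivial coset.\<close>

definition coset_rep :: "('g, 'b) monoid_scheme \<Rightarrow> 'g set \<Rightarrow> 'g \<Rightarrow> 'g" where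
  "coset_rep G S x = (if S #>\<^bsub>G\<^esub> x = S then \<one>\<^bsub>G\<^esub> else (SOME y. y \<in> S #>\<^bsub>G\<^esub> x))"

lemma coset_rep_cong: "S #>\<^bsub>G\<^esub> x = S #>\<^bsub>G\<^esub> y \<Longrightarrow> coset_rep G S x = coset_rep G S y"
  by (simp add: coset_rep_def)

context group
begin

lemma rcos_eq_iff_m_inv_mem:
  assumes "subgroup S G" "x \<in> carrier G" "y \<in> carrier G"
  shows "S #> x = S #> y \<longleftrightarrow> x \<otimes> inv y \<in> S"
proof
  assume "S #> x = S #> y"
  then have "x \<in> S #> y" using rcos_self[OF assms(2,1)] by simp
  then show "x \<otimes> inv y \<in> S" using subgroup.rcos_module_imp[OF assms(1) is_group assms(3)] by blast
next
  assume "x \<otimes> inv y \<in> S"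
  then have "x \<in> S #> y" using subgroup.rcos_module_rev[OF assms(1) is_group assms(3,2)] by blast
  then show "S #> x = S #> y" using repr_independence[OF _ assms(3,1)] by simp
qed

context
  fixes S assumes S: "subgroup S G"
begin

lemma coset_rep_mem_rcos:
  assumes "x \<in> carrier G" shows "coset_rep G S x \<in> S #> x"
proof (cases "S #> x = S")
  case False
  have "(SOME y. y \<in> S #> x) \<in> S #> x" using rcos_self[OF assms S] by (rule someI)
  then show ?thesis using False by (simp add: coset_rep_def)
qed (simp add: coset_rep_def subgroup.one_closed[OF S])

lemma coset_rep_closed[simp]: "x \<in> carrier G \<Longrightarrow> coset_rep G S x \<in> carrier G"
  using subgroup.elemrcos_carrier[OF S is_group _ coset_rep_mem_rcos] .

lemma rcos_coset_rep: "x \<in> carrier G \<Longrightarrow> S #> coset_rep G S x = S #> x"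
  using repr_independence[OF coset_rep_mem_rcos _ S] by simp

lemma coset_rep_eq_iff:
  assumes "x \<in> carrier G" "y \<in> carrier G"
  shows "coset_rep G S x = coset_rep G S y \<longleftrightarrow> x \<otimes> inv y \<in> S"
proof -
  have "coset_rep G S x = coset_rep G S y \<longleftrightarrow> S #> x = S #> y"
  proof
    assume "coset_rep G S x = coset_rep G S y"
    then show "S #> x = S #> y" using rcos_coset_rep assms by metis
  qed (rule coset_rep_cong)
  then show ?thesis using rcos_eq_iff_m_inv_mem[OF S assms] by simp
qed

lemma coset_rep_idem[simp]: "x \<in> carrier G \<Longrightarrow> coset_rep G S (coset_rep G S x) = coset_rep G S x"
  by (rule coset_rep_cong[OF rcos_coset_rep])

lemma m_inv_coset_rep_mem: "x \<in> carrier G \<Longrightarrow> x \<otimes> inv (coset_rep G S x) \<in> S"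
  using coset_rep_eq_iff[of x "coset_rep G S x"] by simp

lemma coset_rep_mult:
  assumes "x \<in> carrier G" "g \<in> carrier G"
  shows "coset_rep G S (coset_rep G S x \<otimes> g) = coset_rep G S (x \<otimes> g)"
proof -
  have "S #> (coset_rep G S x \<otimes> g) = (S #> coset_rep G S x) #> g"
    using coset_mult_assoc[OF subgroup.subset[OF S]] assms by simp
  also have "\<dots> = S #> (x \<otimes> g)"
    using rcos_coset_rep coset_mult_assoc[OF subgroup.subset[OF S]] assms by simp
  finally have "S #> (coset_rep G S x \<otimes> g) = S #> (x \<otimes> g)" .
  then show ?thesis by (rule coset_rep_cong)
qed

lemma coset_rep_subgroup: "s \<in> S \<Longrightarrow> coset_rep G S s = \<one>"
  using coset_join2[OF subgroup.mem_carrier[OF S] S] by (simp add: coset_rep_def)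

lemma card_coset_rep_fibre:
  assumes "finite (carrier G)" "t \<in> coset_rep G S ` carrier G"
  shows "card {x \<in> carrier G. coset_rep G S x = t} = card S"
proof -
  obtain y where y: "y \<in> carrier G" "t = coset_rep G S y" using assms(2) by auto
  then have t: "t \<in> carrier G" "coset_rep G S t = t" by simp_all
  have "{x \<in> carrier G. coset_rep G S x = t} = S #> t"
  proof (intro equalityI subsetI)
    fix x assume "x \<in> {x \<in> carrier G. coset_rep G S x = t}"
    then show "x \<in> S #> t"
      using coset_rep_eq_iff[of x t] t subgroup.rcos_module[OF S is_group t(1)] by auto
  next
    fix x assume x: "x \<in> S #> t"
    then have "x \<in> carrier G" using r_coset_subset_G[OF subgroup.subset[OF S] t(1)] by blast
    then show "x \<in> {x \<in> carrier G. coset_rep G S x = t}"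
      using x coset_rep_eq_iff[of x t] t subgroup.rcos_module[OF S is_group t(1)] by auto
  qed
  then show ?thesis
    using card_rcosets_equal[OF rcosetsI[OF subgroup.subset[OF S] t(1)] subgroup.subset[OF S]] by simp
qed

lemma sum_over_coset_reps:
  assumes "finite (carrier G)"
  shows "(\<Sum>h\<in>carrier G. F (coset_rep G S h)) = of_nat (card S) * (\<Sum>t\<in>coset_rep G S ` carrier G. F t)"
proof -
  have "(\<Sum>h\<in>carrier G. F (coset_rep G S h)) =
      (\<Sum>t\<in>coset_rep G S ` carrier G. \<Sum>h\<in>{x \<in> carrier G. coset_rep G S x = t}. F (coset_rep G S h))"
    by (rule sum.group[OF assms finite_imageI[OF assms] subset_refl, symmetric])
  also have "\<dots> = (\<Sum>t\<in>coset_rep G S ` carrier G. of_nat (card S) * F t)"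
  proof (intro sum.cong refl)
    fix t assume "t \<in> coset_rep G S ` carrier G"
    then show "(\<Sum>h\<in>{x \<in> carrier G. coset_rep G S x = t}. F (coset_rep G S h)) = of_nat (card S) * F t"
      using card_coset_rep_fibre[OF assms] by simp
  qed
  finally show ?thesis by (simp add: sum_distrib_left)
qed

end

end

text \<open>Blocks of the induced representation are indexed by \<open>a < k\<close> through an enumeration
  \<open>e\<close> of the coset representatives.\<close>

locale coset_enumeration = group G for G (structure) +
  fixes S :: "'a set" and k :: nat and e :: "nat \<Rightarrow> 'a"
  assumes finite_carrier: "finite (carrier G)" and subgroup_S: "subgroup S G"
    and enumerates_reps: "bij_betw e {..<k} (coset_rep G S ` carrier G)"
begin

abbreviation reps where "reps \<equiv> coset_rep G S ` carrier G"

lemma subgroup_mem_carrier: "s \<in> S \<Longrightarrow> s \<in> carrier G"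
  using subgroup.mem_carrier[OF subgroup_S] .

lemma card_reps: "card reps = k"
  using bij_betw_same_card[OF enumerates_reps] by simp

lemma card_carrier_eq: "real (card (carrier G)) = real (card S) * real k"
  using sum_over_coset_reps[OF subgroup_S finite_carrier, of "\<lambda>_. 1"] card_reps by simp

definition rep_index :: "'a \<Rightarrow> nat" where
  "rep_index = the_inv_into {..<k} e"

lemma enum_rep: "a < k \<Longrightarrow> e a \<in> reps"
  using enumerates_reps by (auto simp: bij_betw_def)

lemma enum_closed[simp]: "a < k \<Longrightarrow> e a \<in> carrier G"
  using enum_rep coset_rep_closed[OF subgroup_S] by (metis imageE)

lemma coset_rep_enum[simp]: "a < k \<Longrightarrow> coset_rep G S (e a) = e a"
  using enum_rep coset_rep_idem[OF subgroup_S] by (metis imageE)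

lemma rep_index_enum[simp]: "a < k \<Longrightarrow> rep_index (e a) = a"
  unfolding rep_index_def using enumerates_reps by (auto simp: bij_betw_def the_inv_into_f_f)

lemma enum_rep_index[simp]: "t \<in> reps \<Longrightarrow> e (rep_index t) = t"
  unfolding rep_index_def using enumerates_reps by (auto simp: bij_betw_def f_the_inv_into_f)

lemma rep_index_less: "t \<in> reps \<Longrightarrow> rep_index t < k"
  unfolding rep_index_def using enumerates_reps the_inv_into_into[of e "{..<k}" t "{..<k}"]
  by (simp add: bij_betw_def)

definition trivial_index :: nat where
  "trivial_index = rep_index \<one>"

lemma one_mem_reps: "\<one> \<in> reps"
  using image_eqI[of \<one> "coset_rep G S" \<one>] coset_rep_subgroup[OF subgroup_S] subgroup.one_closed[OF subgroup_S]
  by simp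

lemma trivial_index: "trivial_index < k" "e trivial_index = \<one>"
  unfolding trivial_index_def using rep_index_less[OF one_mem_reps] enum_rep_index[OF one_mem_reps]
  by simp_all

lemma k_pos: "0 < k"
  using trivial_index by simp

text \<open>Right multiplication by \<open>g\<close> permutes the cosets, and
  \<open>e a \<otimes> g = coset_cocycle g a \<otimes> e (coset_shift g a)\<close> with \<open>coset_cocycle g a \<in> S\<close>.\<close>

definition coset_shift :: "'a \<Rightarrow> nat \<Rightarrow> nat" where
  "coset_shift g a = rep_index (coset_rep G S (e a \<otimes> g))"

definition coset_cocycle :: "'a \<Rightarrow> nat \<Rightarrow> 'a" where
  "coset_cocycle g a = e a \<otimes> g \<otimes> inv (coset_rep G S (e a \<otimes> g))"

lemma coset_shift_less: "a < k \<Longrightarrow> g \<in> carrier G \<Longrightarrow> coset_shift g a < k"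
  unfolding coset_shift_def by (rule rep_index_less) (use subgroup_S in auto)

lemma enum_coset_shift: "a < k \<Longrightarrow> g \<in> carrier G \<Longrightarrow> e (coset_shift g a) = coset_rep G S (e a \<otimes> g)"
  unfolding coset_shift_def by (rule enum_rep_index) (use subgroup_S in auto)

lemma coset_cocycle_mem: "a < k \<Longrightarrow> g \<in> carrier G \<Longrightarrow> coset_cocycle g a \<in> S"
  unfolding coset_cocycle_def by (rule m_inv_coset_rep_mem[OF subgroup_S]) auto

lemma coset_cocycle_closed[simp]: "a < k \<Longrightarrow> g \<in> carrier G \<Longrightarrow> coset_cocycle g a \<in> carrier G"
  using subgroup_mem_carrier[OF coset_cocycle_mem] .

lemma coset_cocycle_mult_enum:
  "a < k \<Longrightarrow> g \<in> carrier G \<Longrightarrow> coset_cocycle g a \<otimes> e (coset_shift g a) = e a \<otimes> g"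
  using enum_coset_shift subgroup_S by (simp add: coset_cocycle_def m_assoc)

lemma coset_shift_one: "a < k \<Longrightarrow> coset_shift \<one> a = a"
  by (simp add: coset_shift_def)

lemma coset_cocycle_one: "a < k \<Longrightarrow> coset_cocycle \<one> a = \<one>"
  by (simp add: coset_cocycle_def)

lemma coset_shift_mult:
  assumes "a < k" "g \<in> carrier G" "h \<in> carrier G"
  shows "coset_shift h (coset_shift g a) = coset_shift (g \<otimes> h) a"
  using assms subgroup_S by (simp add: coset_shift_def enum_coset_shift coset_rep_mult m_assoc)

lemma coset_cocycle_mult:
  assumes "a < k" "g \<in> carrier G" "h \<in> carrier G"
  shows "coset_cocycle g a \<otimes> coset_cocycle h (coset_shift g a) = coset_cocycle (g \<otimes> h) a"
proof -
  have "coset_rep G S (e (coset_shift g a) \<otimes> h) = coset_rep G S (e a \<otimes> g \<otimes> h)"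
    using assms subgroup_S by (simp add: enum_coset_shift coset_rep_mult)
  moreover have "x \<otimes> inv y \<otimes> y = x" if "x \<in> carrier G" "y \<in> carrier G" for x y
    using that by (simp add: m_assoc)
  ultimately show ?thesis
    using assms subgroup_S
    by (simp add: coset_cocycle_def enum_coset_shift[OF assms(1,2)] m_assoc[symmetric])
qed

lemma coset_shift_eq_iff:
  assumes "a < k" "b < k" "g \<in> carrier G"
  shows "coset_shift g b = a \<longleftrightarrow> e b \<otimes> g \<otimes> inv (e a) \<in> S"
proof -
  have "coset_shift g b = a \<longleftrightarrow> coset_rep G S (e b \<otimes> g) = coset_rep G S (e a)"
  proof
    assume "coset_shift g b = a"
    then show "coset_rep G S (e b \<otimes> g) = coset_rep G S (e a)"
      using enum_coset_shift[OF assms(2,3)] coset_rep_enum[OF assms(1)] by metis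
  qed (use assms(1) in \<open>simp add: coset_shift_def\<close>)
  then show ?thesis using coset_rep_eq_iff[OF subgroup_S, of "e b \<otimes> g" "e a"] assms by simp
qed

lemma coset_shift_inv:
  assumes "a < k" "b < k" "g \<in> carrier G"
  shows "coset_shift g b = a \<longleftrightarrow> coset_shift (inv g) a = b"
proof -
  define x where "x = e b \<otimes> g \<otimes> inv (e a)"
  have x: "x \<in> carrier G" and inv_x: "inv x = e a \<otimes> inv g \<otimes> inv (e b)"
    using assms by (simp_all add: x_def inv_mult_group m_assoc)
  have "x \<in> S \<longleftrightarrow> e a \<otimes> inv g \<otimes> inv (e b) \<in> S"
    using subgroup.m_inv_closed[OF subgroup_S, of x] subgroup.m_inv_closed[OF subgroup_S, of "inv x"] x
    unfolding inv_x[symmetric] by auto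
  then show ?thesis unfolding x_def
    using coset_shift_eq_iff[OF assms] coset_shift_eq_iff[OF assms(2,1) inv_closed[OF assms(3)]] by simp
qed

lemma coset_cocycle_inv:
  assumes "a < k" "b < k" "g \<in> carrier G" "coset_shift g b = a"
  shows "coset_cocycle (inv g) a = inv (coset_cocycle g b)"
proof -
  have "coset_shift (inv g) a = b" using coset_shift_inv[OF assms(1-3)] assms(4) by blast
  then have "coset_cocycle (inv g) a = e a \<otimes> inv g \<otimes> inv (e b)"
    using enum_coset_shift[OF assms(1) inv_closed[OF assms(3)]] by (simp add: coset_cocycle_def)
  moreover have "coset_cocycle g b = e b \<otimes> g \<otimes> inv (e a)"
    using enum_coset_shift[OF assms(2,3)] assms(4) by (simp add: coset_cocycle_def)
  ultimately show ?thesis using assms by (simp add: inv_mult_group m_assoc)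
qed

end

lemma (in group) ex_coset_enumeration:
  assumes "finite (carrier G)" "subgroup S G"
  obtains k e where "coset_enumeration G S k e"
proof -
  obtain e where "bij_betw e {0..<card (coset_rep G S ` carrier G)} (coset_rep G S ` carrier G)"
    using ex_bij_betw_nat_finite[OF finite_imageI[OF assms(1)]] by blast
  then have "coset_enumeration G S (card (coset_rep G S ` carrier G)) e"
    using assms
    by (intro coset_enumeration.intro coset_enumeration_axioms.intro is_group)
      (simp_all add: lessThan_atLeast0)
  then show ?thesis by (rule that)
qed

section \<open>The induced representation\<close>

locale induced_setting = coset_enumeration +
  fixes n :: nat and f :: "'a \<Rightarrow> complex mat"
  assumes unitary_f: "\<And>g. g \<in> carrier G \<Longrightarrow> unitary_mat n (f g)"
    and f_mult_left: "\<And>s g. s \<in> S \<Longrightarrow> g \<in> carrier G \<Longrightarrow> f (s \<otimes> g) = f s * f g"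
begin

lemma f_carrier[simp]: "g \<in> carrier G \<Longrightarrow> f g \<in> carrier_mat n n"
  using unitary_f by (simp add: unitary_mat_def)

lemma f_adjoint_mult: "g \<in> carrier G \<Longrightarrow> mat_adjoint (f g) * f g = 1\<^sub>m n"
  using unitary_f by (simp add: unitary_mat_def)

lemma f_one: "f \<one> = 1\<^sub>m n"
proof -
  have "f \<one> = f \<one> * f \<one>"
    using f_mult_left[of \<one> \<one>] subgroup.one_closed[OF subgroup_S] by simp
  then have "mat_adjoint (f \<one>) * (f \<one> * f \<one>) = mat_adjoint (f \<one>) * f \<one>" by simp
  then show ?thesis using unitary_mat_cancel_left[OF unitary_f, of \<one> "f \<one>" n] f_adjoint_mult by simp
qed

lemma f_inv: assumes "s \<in> S" shows "f (inv s) = mat_adjoint (f s)"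
proof -
  have s: "s \<in> carrier G" using subgroup_mem_carrier[OF assms] .
  have "f s * f (inv s) = 1\<^sub>m n"
    using f_mult_left[of s "inv s"] s assms f_one by simp
  then have "mat_adjoint (f s) * (f s * f (inv s)) = mat_adjoint (f s)"
    using right_mult_one_mat[OF mat_adjoint_carrier_mat[OF f_carrier[OF s]]] by simp
  then show ?thesis using unitary_mat_cancel_left[OF unitary_f[OF s] f_carrier[OF inv_closed[OF s]]] by simp
qed

definition induced_rep :: "'a \<Rightarrow> complex mat" where
  "induced_rep g = block_monomial k n (coset_shift g) (\<lambda>a. f (coset_cocycle g a))"

lemma induced_rep_carrier[simp]: "induced_rep g \<in> carrier_mat (k*n) (k*n)"
  by (simp add: induced_rep_def)

lemma induced_rep_mult:
  assumes "g \<in> carrier G" "h \<in> carrier G"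
  shows "induced_rep g * induced_rep h = induced_rep (g \<otimes> h)"
proof -
  have "induced_rep g * induced_rep h = block_monomial k n (\<lambda>a. coset_shift h (coset_shift g a))
      (\<lambda>a. f (coset_cocycle g a) * f (coset_cocycle h (coset_shift g a)))"
    unfolding induced_rep_def using assms by (intro block_monomial_mult) (auto simp: coset_shift_less)
  also have "\<dots> = induced_rep (g \<otimes> h)"
    unfolding induced_rep_def using assms
    by (intro block_monomial_cong)
      (simp_all add: coset_shift_mult coset_shift_less f_mult_left[OF coset_cocycle_mem, symmetric]
        coset_cocycle_mult)
  finally show ?thesis .
qed

lemma induced_rep_one: "induced_rep \<one> = 1\<^sub>m (k*n)"
  unfolding induced_rep_def block_monomial_id[symmetric]
  by (intro block_monomial_cong) (simp_all add: coset_shift_one coset_cocycle_one f_one)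

lemma induced_rep_inv:
  assumes g: "g \<in> carrier G"
  shows "induced_rep (inv g) = mat_adjoint (induced_rep g)"
proof (rule eq_matI)
  fix i j assume "i < dim_row (mat_adjoint (induced_rep g))" "j < dim_col (mat_adjoint (induced_rep g))"
  then have ij: "i < k*n" "j < k*n" by (simp_all add: induced_rep_def)
  define a b where "a = i div n" and "b = j div n"
  have ab: "a < k" "b < k" using ij div_less_of_less_mult a_def b_def by auto
  have "mat_adjoint (induced_rep g) $$ (i,j) =
      (if a = coset_shift g b then cnj (f (coset_cocycle g b) $$ (j mod n, i mod n)) else 0)"
    using ij by (simp add: induced_rep_def block_monomial_def a_def b_def)
  also have "\<dots> = (if b = coset_shift (inv g) a
      then f (coset_cocycle (inv g) a) $$ (i mod n, j mod n) else 0)"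
    using ab g ij coset_shift_inv[OF ab g] coset_cocycle_inv[OF ab g]
      f_inv[OF coset_cocycle_mem[OF ab(2) g]] mod_less_of_less_mult
      carrier_matD[OF f_carrier[OF coset_cocycle_closed[OF ab(2) g]]]
    by auto
  also have "\<dots> = induced_rep (inv g) $$ (i,j)"
    using ij by (simp add: induced_rep_def block_monomial_def a_def b_def)
  finally show "induced_rep (inv g) $$ (i,j) = mat_adjoint (induced_rep g) $$ (i,j)" by simp
qed (simp_all add: induced_rep_def)

lemma unitary_rep_induced_rep: "unitary_rep G (k*n) induced_rep"
proof -
  have "unitary_mat (k*n) (induced_rep g)" if g: "g \<in> carrier G" for g
    using induced_rep_mult[OF inv_closed[OF g] g] induced_rep_mult[OF g inv_closed[OF g]]
      induced_rep_inv[OF g] induced_rep_one g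
    by (simp add: unitary_mat_def)
  then show ?thesis by (simp add: unitary_rep_def induced_rep_mult)
qed

definition norm_factor :: complex where
  "norm_factor = complex_of_real (1 / sqrt k)"

lemma cnj_norm_factor_mult: "cnj norm_factor * norm_factor = 1 / of_nat k"
  using k_pos by (simp add: norm_factor_def flip: of_real_mult)

definition induced_isometry :: "complex mat" where
  "induced_isometry = block_column k n n (\<lambda>a. norm_factor \<cdot>\<^sub>m f (e a))"

lemma isometry_induced_isometry: "isometry_mat (k*n) n induced_isometry"
proof -
  have "mat_adjoint induced_isometry * induced_isometry =
      mat n n (\<lambda>(i,j). \<Sum>a<k. (1 / of_nat k \<cdot>\<^sub>m (mat_adjoint (f (e a)) * f (e a))) $$ (i,j))"
    unfolding induced_isometry_def
    by (simp add: mat_adjoint_block_column_mult mat_adjoint_smult_mult_smult cnj_norm_factor_mult)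
  also have "\<dots> = 1\<^sub>m n"
    using k_pos by (intro eq_matI) (simp_all add: f_adjoint_mult)
  finally show ?thesis by (simp add: isometry_mat_def induced_isometry_def)
qed

end

section \<open>The approximation bound\<close>

context induced_setting
begin

definition hom_defect :: "'a \<Rightarrow> 'a \<Rightarrow> complex mat" where
  "hom_defect h g = f h * f g - f (h \<otimes> g)"

lemma hom_defect_carrier[simp]:
  "h \<in> carrier G \<Longrightarrow> g \<in> carrier G \<Longrightarrow> hom_defect h g \<in> carrier_mat n n"
  by (auto simp: hom_defect_def intro!: minus_carrier_mat)

lemma hom_defect_subgroup_mult:
  assumes "s \<in> S" "h \<in> carrier G" "g \<in> carrier G"
  shows "hom_defect (s \<otimes> h) g = f s * hom_defect h g"
proof -
  have s: "s \<in> carrier G" using subgroup_mem_carrier[OF assms(1)] .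
  have "f (s \<otimes> h \<otimes> g) = f s * f (h \<otimes> g)"
    using f_mult_left[OF assms(1), of "h \<otimes> g"] assms s by (simp add: m_assoc)
  then show ?thesis
    using assms s mult_minus_distrib_mat[of "f s" n n "f h * f g" n "f (h \<otimes> g)"]
      mult_carrier_mat[OF f_carrier[OF assms(2)] f_carrier[OF assms(3)]]
    by (simp add: hom_defect_def f_mult_left assoc_mult_mat[of _ n n _ n _ n])
qed

lemma rho_norm_hom_defect_coset_rep:
  assumes "h \<in> carrier G" "g \<in> carrier G"
  shows "rho_norm \<rho> (hom_defect (coset_rep G S h) g) = rho_norm \<rho> (hom_defect h g)"
proof -
  define s where "s = h \<otimes> inv (coset_rep G S h)"
  have s: "s \<in> S" unfolding s_def using m_inv_coset_rep_mem[OF subgroup_S assms(1)] .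
  have "h = s \<otimes> coset_rep G S h"
    using assms subgroup_S by (simp add: s_def m_assoc)
  then have "hom_defect h g = f s * hom_defect (coset_rep G S h) g"
    using hom_defect_subgroup_mult[OF s _ assms(2), of "coset_rep G S h"] assms subgroup_S by simp
  moreover have "hom_defect (coset_rep G S h) g \<in> carrier_mat n n"
    using assms subgroup_S by simp
  ultimately show ?thesis
    using rho_norm_unitary_mult[OF unitary_f[OF subgroup_mem_carrier[OF s]]] by simp
qed

lemma induced_isometry_defect:
  assumes g: "g \<in> carrier G"
  shows "induced_isometry * f g - induced_rep g * induced_isometry =
    block_column k n n (\<lambda>a. norm_factor \<cdot>\<^sub>m hom_defect (e a) g)"
proof -
  have V: "induced_isometry * f g = block_column k n n (\<lambda>a. norm_factor \<cdot>\<^sub>m (f (e a) * f g))"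
    unfolding induced_isometry_def using g
    by (subst block_column_mult[where w' = n])
      (auto intro!: block_column_cong simp: mult_smult_assoc_mat[of _ n n _ n])
  have \<phi>: "induced_rep g * induced_isometry =
      block_column k n n (\<lambda>a. norm_factor \<cdot>\<^sub>m f (e a \<otimes> g))"
    unfolding induced_rep_def induced_isometry_def using g
    by (subst block_monomial_mult_block_column)
      (auto intro!: block_column_cong simp: coset_shift_less mult_smult_distrib[of _ n n _ n]
        f_mult_left[OF coset_cocycle_mem, symmetric] coset_cocycle_mult_enum)
  have "induced_isometry * f g - induced_rep g * induced_isometry =
      block_column k n n (\<lambda>a. norm_factor \<cdot>\<^sub>m (f (e a) * f g) - norm_factor \<cdot>\<^sub>m f (e a \<otimes> g))"
    unfolding V \<phi> using g by (intro block_column_minus) (auto intro!: smult_carrier_mat mult_carrier_mat[where n=n])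
  also have "\<dots> = block_column k n n (\<lambda>a. norm_factor \<cdot>\<^sub>m hom_defect (e a) g)"
    using g by (intro block_column_cong)
      (simp add: hom_defect_def smult_minus_distrib_mat[OF mult_carrier_mat[OF f_carrier f_carrier] f_carrier])
  finally show ?thesis .
qed

lemma rho_norm_induced_defect_power2_le:
  assumes \<rho>: "\<rho> \<in> carrier_mat n n" and g: "g \<in> carrier G"
  shows "(rho_norm \<rho> (induced_isometry * f g - induced_rep g * induced_isometry))\<^sup>2 \<le>
    (\<Sum>a<k. (rho_norm \<rho> (hom_defect (e a) g))\<^sup>2) / k"
proof -
  let ?D = "induced_isometry * f g - induced_rep g * induced_isometry"
  let ?t = "\<lambda>a. mtrace (mat_adjoint (hom_defect (e a) g) * hom_defect (e a) g * \<rho>)"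
  let ?Q = "\<lambda>a. mat_adjoint (norm_factor \<cdot>\<^sub>m hom_defect (e a) g) * (norm_factor \<cdot>\<^sub>m hom_defect (e a) g)"
  have "mtrace (mat_adjoint ?D * ?D * \<rho>) = mtrace (mat n n (\<lambda>(i,j). \<Sum>a<k. ?Q a $$ (i,j)) * \<rho>)"
    unfolding induced_isometry_defect[OF g] using g by (simp add: mat_adjoint_block_column_mult)
  also have "\<dots> = (\<Sum>a<k. mtrace (?Q a * \<rho>))"
    using g \<rho> by (intro mtrace_sum_mult) (auto intro!: mult_carrier_mat[where n=n])
  also have "\<dots> = (\<Sum>a<k. ?t a / k)"
  proof (intro sum.cong refl)
    fix a assume "a \<in> {..<k}"
    then have X: "hom_defect (e a) g \<in> carrier_mat n n" using g by simp
    show "mtrace (?Q a * \<rho>) = ?t a / k"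
      using mtrace_smult_mult[OF mult_carrier_mat[OF mat_adjoint_carrier_mat[OF X] X] \<rho>]
      by (simp add: mat_adjoint_smult_mult_smult cnj_norm_factor_mult)
  qed
  finally have "(rho_norm \<rho> ?D)\<^sup>2 = \<bar>\<Sum>a<k. Re (?t a) / k\<bar>"
    by (simp add: rho_norm_power2 Re_sum)
  also have "\<dots> \<le> (\<Sum>a<k. \<bar>Re (?t a)\<bar> / k)"
    using sum_abs[of "\<lambda>a. Re (?t a) / k" "{..<k}"] by (simp add: abs_divide)
  finally show ?thesis by (simp add: rho_norm_power2 sum_divide_distrib)
qed

lemma average_hom_defect_over_reps:
  assumes g: "g \<in> carrier G"
  shows "(\<Sum>a<k. (rho_norm \<rho> (hom_defect (e a) g))\<^sup>2) / k =
    (1 / card (carrier G)) * (\<Sum>h\<in>carrier G. (rho_norm \<rho> (hom_defect h g))\<^sup>2)"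
proof -
  let ?z = "\<lambda>h. (rho_norm \<rho> (hom_defect h g))\<^sup>2"
  have "(\<Sum>h\<in>carrier G. ?z h) = (\<Sum>h\<in>carrier G. ?z (coset_rep G S h))"
    using g by (intro sum.cong refl) (simp add: rho_norm_hom_defect_coset_rep)
  also have "\<dots> = card S * (\<Sum>t\<in>reps. ?z t)"
    by (rule sum_over_coset_reps[OF subgroup_S finite_carrier])
  also have "(\<Sum>t\<in>reps. ?z t) = (\<Sum>a<k. ?z (e a))"
    by (rule sum.reindex_bij_betw[OF enumerates_reps, symmetric])
  finally show ?thesis
    using card_carrier_eq subgroup.finite_imp_card_positive[OF subgroup_S finite_carrier] by simp
qed

end

section \<open>Irreducible components give intertwiners\<close>

lemma block_diag_carrier:
  "(\<forall>(k,\<eta>)\<in>set cs. \<eta> g \<in> carrier_mat k k) \<Longrightarrow>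
    block_diag (map (\<lambda>(k,\<eta>). \<eta> g) cs) \<in> carrier_mat (sum_list (map fst cs)) (sum_list (map fst cs))"
  by (induction cs) (auto intro!: four_block_carrier_mat)

lemma index_block_diag_component:
  assumes "(d,\<xi>) \<in> set cs"
  obtains ofs where "ofs + d \<le> sum_list (map fst cs)"
    and "\<And>g i j. \<forall>(k,\<eta>)\<in>set cs. \<eta> g \<in> carrier_mat k k \<Longrightarrow> i < sum_list (map fst cs) \<Longrightarrow> j < d \<Longrightarrow>
       block_diag (map (\<lambda>(k,\<eta>). \<eta> g) cs) $$ (i, ofs+j) =
         (if ofs \<le> i \<and> i < ofs + d then \<xi> g $$ (i - ofs, j) else 0)"
  using assms
proof (induction cs arbitrary: thesis)
  case Nil then show ?case by simp
next
  case (Cons c cs)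
  obtain k0 \<eta>0 where c: "c = (k0, \<eta>0)" by (cases c)
  let ?N = "sum_list (map fst cs)"
  let ?B = "\<lambda>g. block_diag (map (\<lambda>(k,\<eta>). \<eta> g) cs)"
  have split: "block_diag (map (\<lambda>(k,\<eta>). \<eta> g) (c # cs)) =
      four_block_mat (\<eta>0 g) (0\<^sub>m k0 ?N) (0\<^sub>m ?N k0) (?B g)"
    and carr: "\<eta>0 g \<in> carrier_mat k0 k0" "?B g \<in> carrier_mat ?N ?N"
    if "\<forall>(k,\<eta>)\<in>set (c # cs). \<eta> g \<in> carrier_mat k k" for g
    using that block_diag_carrier[of cs g] c by auto
  show ?case
  proof (cases "(d,\<xi>) = (k0,\<eta>0)")
    case True
    show ?thesis
    proof (rule Cons.prems(1)[of 0])
      fix g i j assume g: "\<forall>(k,\<eta>)\<in>set (c # cs). \<eta> g \<in> carrier_mat k k"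
        and "i < sum_list (map fst (c # cs))" "j < d"
      then show "block_diag (map (\<lambda>(k,\<eta>). \<eta> g) (c # cs)) $$ (i, 0 + j) =
          (if 0 \<le> i \<and> i < 0 + d then \<xi> g $$ (i - 0, j) else 0)"
        using split[OF g] carr[OF g] True c by auto
    qed (use True c in simp)
  next
    case False
    then have "(d,\<xi>) \<in> set cs" using Cons.prems(2) c by auto
    then obtain ofs where ofs: "ofs + d \<le> ?N"
      and IH: "\<And>g i j. \<forall>(k,\<eta>)\<in>set cs. \<eta> g \<in> carrier_mat k k \<Longrightarrow> i < ?N \<Longrightarrow> j < d \<Longrightarrow>
        ?B g $$ (i, ofs+j) = (if ofs \<le> i \<and> i < ofs + d then \<xi> g $$ (i - ofs, j) else 0)"
      using Cons.IH by blast
    show ?thesis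
    proof (rule Cons.prems(1)[of "k0 + ofs"])
      fix g i j assume g: "\<forall>(k,\<eta>)\<in>set (c # cs). \<eta> g \<in> carrier_mat k k"
        and i: "i < sum_list (map fst (c # cs))" and j: "j < d"
      show "block_diag (map (\<lambda>(k,\<eta>). \<eta> g) (c # cs)) $$ (i, k0 + ofs + j) =
          (if k0 + ofs \<le> i \<and> i < k0 + ofs + d then \<xi> g $$ (i - (k0 + ofs), j) else 0)"
      proof (cases "i < k0")
        case False
        then have "block_diag (map (\<lambda>(k,\<eta>). \<eta> g) (c # cs)) $$ (i, k0 + ofs + j) =
            ?B g $$ (i - k0, ofs + j)"
          using split[OF g] carr[OF g] i j ofs c by auto
        then show ?thesis
          using IH[of g "i - k0" j] g i j c False by (auto simp: diff_diff_add)
      qed (use split[OF g] carr[OF g] i j ofs c in auto)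
    qed (use ofs c in simp)
  qed
qed

lemma block_diag_intertwiner:
  assumes "(d,\<xi>) \<in> set cs" "0 < d"
  obtains E where "E \<in> carrier_mat (sum_list (map fst cs)) d" "E \<noteq> 0\<^sub>m (sum_list (map fst cs)) d"
    and "\<And>g. \<forall>(k,\<eta>)\<in>set cs. \<eta> g \<in> carrier_mat k k \<Longrightarrow>
      block_diag (map (\<lambda>(k,\<eta>). \<eta> g) cs) * E = E * \<xi> g"
proof -
  let ?N = "sum_list (map fst cs)"
  let ?B = "\<lambda>g. block_diag (map (\<lambda>(k,\<eta>). \<eta> g) cs)"
  obtain ofs where ofs: "ofs + d \<le> ?N"
    and B: "\<And>g i j. \<forall>(k,\<eta>)\<in>set cs. \<eta> g \<in> carrier_mat k k \<Longrightarrow> i < ?N \<Longrightarrow> j < d \<Longrightarrow>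
      ?B g $$ (i, ofs+j) = (if ofs \<le> i \<and> i < ofs + d then \<xi> g $$ (i - ofs, j) else 0)"
    using index_block_diag_component[OF assms(1)] by blast
  define E where "E = mat ?N d (\<lambda>(i,j). if i = ofs + j then 1 else (0::complex))"
  have "?B g * E = E * \<xi> g" if g: "\<forall>(k,\<eta>)\<in>set cs. \<eta> g \<in> carrier_mat k k" for g
  proof (rule eq_matI)
    have \<xi>: "\<xi> g \<in> carrier_mat d d" using g assms(1) by auto
    fix i j assume "i < dim_row (E * \<xi> g)" "j < dim_col (E * \<xi> g)"
    then have ij: "i < ?N" "j < d" using \<xi> by (auto simp: E_def)
    have "(?B g * E) $$ (i,j) = (\<Sum>l<?N. ?B g $$ (i,l) * (if l = ofs + j then 1 else 0))"
      using block_diag_carrier[OF g] ij by (simp add: index_mult_mat_sum E_def)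
    also have "\<dots> = (\<Sum>l<?N. if l = ofs + j then ?B g $$ (i,l) else 0)"
      by (intro sum.cong) auto
    also have "\<dots> = (if ofs \<le> i \<and> i < ofs + d then \<xi> g $$ (i - ofs, j) else 0)"
      using B[OF g ij] ofs ij by simp
    also have "\<dots> = (\<Sum>l<d. (if i = ofs + l then 1 else 0) * \<xi> g $$ (l,j))"
    proof (cases "ofs \<le> i \<and> i < ofs + d")
      case True
      then have "(\<Sum>l<d. (if i = ofs + l then 1 else 0) * \<xi> g $$ (l,j)) =
          (\<Sum>l<d. if l = i - ofs then \<xi> g $$ (l,j) else 0)"
        by (intro sum.cong) auto
      then show ?thesis using True by (simp add: less_diff_conv2)
    qed auto
    also have "\<dots> = (E * \<xi> g) $$ (i,j)"
      using ij \<xi> by (simp add: index_mult_mat_sum E_def)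
    finally show "(?B g * E) $$ (i,j) = (E * \<xi> g) $$ (i,j)" .
  qed (use block_diag_carrier[OF that] assms(1) that in \<open>auto simp: E_def\<close>)
  moreover have "E $$ (ofs, 0) \<noteq> 0\<^sub>m ?N d $$ (ofs, 0)"
    using ofs assms(2) by (simp add: E_def)
  then have "E \<noteq> 0\<^sub>m ?N d" by metis
  moreover have "E \<in> carrier_mat ?N d" by (simp add: E_def)
  ultimately show ?thesis using that by blast
qed

lemma irreducible_rep_irr_component: "irr_component G m \<phi> d \<xi> \<Longrightarrow> irreducible_rep G d \<xi>"
  by (auto simp: irr_component_def)

lemma unitary_mat_cancel_right:
  assumes "unitary_mat n U" "X \<in> carrier_mat n w"
  shows "U * (mat_adjoint U * X) = X"
  using assms assoc_mult_mat[of U n n "mat_adjoint U" n X w] by (simp add: unitary_mat_def)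

lemma (in group) irr_component_intertwiner:
  assumes "irr_component G m \<phi> d \<xi>" and \<phi>: "\<And>g. g \<in> carrier G \<Longrightarrow> \<phi> g \<in> carrier_mat m m"
  obtains W where "W \<in> carrier_mat m d" "W \<noteq> 0\<^sub>m m d" "\<And>g. g \<in> carrier G \<Longrightarrow> \<phi> g * W = W * \<xi> g"
proof -
  obtain cs U where irr: "\<forall>(k, \<eta>)\<in>set cs. irreducible_rep G k \<eta>" and U: "unitary_mat m U"
    and diag: "\<And>g. g \<in> carrier G \<Longrightarrow> U * \<phi> g * mat_adjoint U = block_diag (map (\<lambda>(k, \<eta>). \<eta> g) cs)"
    and mem: "(d, \<xi>) \<in> set cs"
    using assms(1) unfolding irr_component_def by blast
  have carr: "\<forall>(k,\<eta>)\<in>set cs. \<eta> g \<in> carrier_mat k k" if "g \<in> carrier G" for g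
    using irr that by (auto simp: irreducible_rep_def unitary_rep_def unitary_mat_def)
  have Uc: "U \<in> carrier_mat m m" using U by (simp add: unitary_mat_def)
  have \<xi>: "\<xi> g \<in> carrier_mat d d" if "g \<in> carrier G" for g
    using carr[OF that] mem by auto
  have "U * \<phi> \<one> * mat_adjoint U \<in> carrier_mat m m"
    using Uc \<phi>[OF one_closed] by (auto intro!: mult_carrier_mat)
  then have N: "sum_list (map fst cs) = m"
    using diag[OF one_closed] block_diag_carrier[OF carr[OF one_closed]] by auto
  have "0 < d" using irr mem by (auto simp: irreducible_rep_def)
  from block_diag_intertwiner[OF mem this] obtain E
    where E: "E \<in> carrier_mat m d" "E \<noteq> 0\<^sub>m m d"
      and BE: "\<And>g. \<forall>(k,\<eta>)\<in>set cs. \<eta> g \<in> carrier_mat k k \<Longrightarrow>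
        block_diag (map (\<lambda>(k,\<eta>). \<eta> g) cs) * E = E * \<xi> g"
    unfolding N by blast
  define W where "W = mat_adjoint U * E"
  have W: "W \<in> carrier_mat m d"
    unfolding W_def using mult_carrier_mat[OF mat_adjoint_carrier_mat[OF Uc] E(1)] .
  have UW: "U * W = E" using unitary_mat_cancel_right[OF U E(1)] by (simp add: W_def)
  have "\<phi> g * W = W * \<xi> g" if g: "g \<in> carrier G" for g
  proof -
    have "U * (\<phi> g * W) = (U * \<phi> g * mat_adjoint U) * E"
      using assoc_mult_mat[OF mult_carrier_mat[OF Uc \<phi>[OF g]] mat_adjoint_carrier_mat[OF Uc] E(1)]
        assoc_mult_mat[OF Uc \<phi>[OF g] W]
      unfolding W_def by simp
    also have "\<dots> = U * (W * \<xi> g)"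
      using BE[OF carr[OF g]] diag[OF g] UW assoc_mult_mat[OF Uc W \<xi>[OF g]] by simp
    finally have "mat_adjoint U * (U * (\<phi> g * W)) = mat_adjoint U * (U * (W * \<xi> g))" by simp
    then show ?thesis
      using unitary_mat_cancel_left[OF U mult_carrier_mat[OF \<phi>[OF g] W]]
        unitary_mat_cancel_left[OF U mult_carrier_mat[OF W \<xi>[OF g]]] by simp
  qed
  moreover have "W \<noteq> 0\<^sub>m m d"
  proof
    assume "W = 0\<^sub>m m d"
    then have "E = 0\<^sub>m m d" using UW Uc by simp
    then show False using E(2) by simp
  qed
  ultimately show ?thesis using W that by blast
qed

section \<open>The Fourier transform at an intertwiner\<close>

text \<open>Row-major vectorisation \<open>\<complex>^(n\<times>d) \<rightarrow> \<complex>^n \<otimes> \<complex>^d\<close>, matching the index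
  convention of \<open>kron\<close>.\<close>

definition vectorise :: "nat \<Rightarrow> nat \<Rightarrow> complex mat \<Rightarrow> complex vec" where
  "vectorise n d A = vec (n*d) (\<lambda>q. A $$ (q div d, q mod d))"

text \<open>Each summand \<open>u(s) \<otimes> conj \<xi>(s)\<close> of the Fourier transform acts on vectorised
  matrices as \<open>A \<mapsto> u(s) A \<xi>(s)\<^sup>*\<close>, which fixes an intertwiner \<open>A\<close>.\<close>

lemma kron_conj_vectorise:
  assumes "U \<in> carrier_mat n n" "X \<in> carrier_mat d d" "A \<in> carrier_mat n d" "p < n*d"
  shows "(\<Sum>q<n*d. kron U (map_mat cnj X) $$ (p,q) * vectorise n d A $ q) =
    (U * A * mat_adjoint X) $$ (p div d, p mod d)"
proof -
  have p: "p div d < n" "p mod d < d"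
    using assms(4) div_less_of_less_mult[of p n d] mod_less_of_less_mult[of p n d] by simp_all
  have "(\<Sum>q<n*d. kron U (map_mat cnj X) $$ (p,q) * vectorise n d A $ q) =
      (\<Sum>i<n. \<Sum>j<d. kron U (map_mat cnj X) $$ (p,i*d+j) * vectorise n d A $ (i*d+j))"
    by (rule sum_lessThan_mult_split)
  also have "\<dots> = (\<Sum>i<n. \<Sum>j<d. U $$ (p div d, i) * A $$ (i, j) * cnj (X $$ (p mod d, j)))"
    using assms p by (intro sum.cong refl) (simp add: kron_def vectorise_def block_index_less)
  also have "\<dots> = (\<Sum>j<d. (\<Sum>i<n. U $$ (p div d, i) * A $$ (i, j)) * cnj (X $$ (p mod d, j)))"
    by (simp add: sum.swap[of _ "{..<d}"] sum_distrib_right)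
  also have "\<dots> = (U * A * mat_adjoint X) $$ (p div d, p mod d)"
    using assms p by (simp add: index_mult_mat_sum)
  finally show ?thesis .
qed

lemma fourier_mult_vectorise_intertwiner:
  assumes "finite S" "S \<noteq> {}" and A: "A \<in> carrier_mat n d"
    and u: "\<And>s. s \<in> S \<Longrightarrow> u s \<in> carrier_mat n n"
    and \<xi>: "\<And>s. s \<in> S \<Longrightarrow> \<xi> s \<in> carrier_mat d d" "\<And>s. s \<in> S \<Longrightarrow> \<xi> s * mat_adjoint (\<xi> s) = 1\<^sub>m d"
    and intertwines: "\<And>s. s \<in> S \<Longrightarrow> u s * A = A * \<xi> s"
  shows "fourier S n u d \<xi> *\<^sub>v vectorise n d A = vectorise n d A"
proof (rule eq_vecI)
  fix p assume "p < dim_vec (vectorise n d A)"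
  then have p: "p < n*d" by (simp add: vectorise_def)
  have fixed: "u s * A * mat_adjoint (\<xi> s) = A" if s: "s \<in> S" for s
    using intertwines[OF s] \<xi>[OF s] A by (simp add: assoc_mult_mat[of A n d "\<xi> s" d _ d])
  have "(fourier S n u d \<xi> *\<^sub>v vectorise n d A) $ p =
      (\<Sum>q<n*d. (\<Sum>s\<in>S. kron (u s) (map_mat cnj (\<xi> s)) $$ (p,q)) / card S * vectorise n d A $ q)"
    using p by (simp add: fourier_def scalar_prod_def lessThan_atLeast0 vectorise_def)
  also have "\<dots> = (\<Sum>s\<in>S. \<Sum>q<n*d. kron (u s) (map_mat cnj (\<xi> s)) $$ (p,q) * vectorise n d A $ q) / card S"
    by (simp add: sum_divide_distrib sum_distrib_right sum.swap[of _ S])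
  also have "\<dots> = (\<Sum>s\<in>S. A $$ (p div d, p mod d)) / card S"
    using kron_conj_vectorise[OF u \<xi>(1) A p] fixed by simp
  also have "\<dots> = vectorise n d A $ p"
    using assms(1,2) p by (simp add: vectorise_def)
  finally show "(fourier S n u d \<xi> *\<^sub>v vectorise n d A) $ p = vectorise n d A $ p" .
qed (simp add: fourier_def vectorise_def)

lemma fourier_nonzero_of_intertwiner:
  assumes "finite S" "S \<noteq> {}" "A \<in> carrier_mat n d" "A \<noteq> 0\<^sub>m n d"
    "\<And>s. s \<in> S \<Longrightarrow> u s \<in> carrier_mat n n"
    "\<And>s. s \<in> S \<Longrightarrow> \<xi> s \<in> carrier_mat d d" "\<And>s. s \<in> S \<Longrightarrow> \<xi> s * mat_adjoint (\<xi> s) = 1\<^sub>m d"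
    "\<And>s. s \<in> S \<Longrightarrow> u s * A = A * \<xi> s"
  shows "fourier S n u d \<xi> \<noteq> 0\<^sub>m (n*d) (n*d)"
proof
  assume F0: "fourier S n u d \<xi> = 0\<^sub>m (n*d) (n*d)"
  have "A $$ (i, j) = 0" if "i < n" "j < d" for i j
  proof -
    have "A $$ (i, j) = vectorise n d A $ (i*d+j)"
      using that block_index_less[OF that] by (simp add: vectorise_def)
    also have "\<dots> = (fourier S n u d \<xi> *\<^sub>v vectorise n d A) $ (i*d+j)"
      using fourier_mult_vectorise_intertwiner[where u=u and \<xi>=\<xi>, OF assms(1-3,5-8)] by simp
    also have "\<dots> = 0"
      using F0 block_index_less[OF that] by (simp add: scalar_prod_def vectorise_def)
    finally show ?thesis .
  qed
  then show False using assms(3,4) by (auto intro!: eq_matI)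
qed

section \<open>Frobenius reciprocity for the induced representation\<close>

context induced_setting
begin

text \<open>The intertwining relation at \<open>g = e a\<close> expresses block \<open>a\<close> through the block at the
  trivial coset, so that block is nonzero as soon as the intertwiner is.\<close>

lemma induced_intertwiner_restrict:
  assumes W: "W \<in> carrier_mat (k*n) d" "W \<noteq> 0\<^sub>m (k*n) d"
    and \<xi>: "\<And>g. g \<in> carrier G \<Longrightarrow> \<xi> g \<in> carrier_mat d d"
    and intertwines: "\<And>g. g \<in> carrier G \<Longrightarrow> induced_rep g * W = W * \<xi> g"
  obtains A where "A \<in> carrier_mat n d" "A \<noteq> 0\<^sub>m n d" "\<And>s. s \<in> S \<Longrightarrow> f s * A = A * \<xi> s"
proof -
  define B where "B a = mat n d (\<lambda>(i,j). W $$ (a*n+i, j))" for a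
  have B: "B a \<in> carrier_mat n d" for a by (simp add: B_def)
  have W_blocks: "W = block_column k n d B"
    unfolding B_def using W(1) by (rule block_column_blocks)
  have block_eq: "f (coset_cocycle g a) * B (coset_shift g a) = B a * \<xi> g"
    if g: "g \<in> carrier G" and a: "a < k" for g a
  proof -
    have "block_column k n d (\<lambda>a. f (coset_cocycle g a) * B (coset_shift g a)) = induced_rep g * W"
      unfolding W_blocks induced_rep_def using g B
      by (intro block_monomial_mult_block_column[symmetric]) (auto simp: coset_shift_less)
    also have "\<dots> = W * \<xi> g" by (rule intertwines[OF g])
    also have "\<dots> = block_column k n d (\<lambda>a. B a * \<xi> g)"
      unfolding W_blocks using \<xi>[OF g] B by (intro block_column_mult) auto
    finally show ?thesis
      using block_column_inj[where v = "\<lambda>a. f (coset_cocycle g a) * B (coset_shift g a)"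
          and v' = "\<lambda>a. B a * \<xi> g", OF _ a] B \<xi>[OF g] coset_cocycle_closed[OF a g]
      by (simp add: mult_carrier_mat[where n=n] mult_carrier_mat[where n=d])
  qed
  define A where "A = B trivial_index"
  have "f s * A = A * \<xi> s" if s: "s \<in> S" for s
  proof -
    have "coset_shift s trivial_index = trivial_index" "coset_cocycle s trivial_index = s"
      using trivial_index subgroup_mem_carrier[OF s] coset_rep_subgroup[OF subgroup_S s]
      by (simp_all add: coset_shift_def coset_cocycle_def trivial_index_def)
    then show ?thesis using block_eq[OF subgroup_mem_carrier[OF s] trivial_index(1)] by (simp add: A_def)
  qed
  moreover have "A \<noteq> 0\<^sub>m n d"
  proof
    assume A: "A = 0\<^sub>m n d"
    have "B a = 0\<^sub>m n d" if a: "a < k" for a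
    proof -
      let ?s = "coset_cocycle (e a) trivial_index"
      have s: "?s \<in> carrier G" using a trivial_index by simp
      have "coset_shift (e a) trivial_index = a"
        using a trivial_index by (simp add: coset_shift_def)
      then have "f ?s * B a = 0\<^sub>m n d"
        using block_eq[OF enum_closed[OF a] trivial_index(1)] A \<xi>[OF enum_closed[OF a]]
        by (simp add: A_def)
      then have "mat_adjoint (f ?s) * (f ?s * B a) = 0\<^sub>m n d"
        using right_mult_zero_mat[OF mat_adjoint_carrier_mat[OF f_carrier[OF s]]] by simp
      then show ?thesis using unitary_mat_cancel_left[OF unitary_f[OF s] B[of a]] by metis
    qed
    then have "W = block_column k n d (\<lambda>a. 0\<^sub>m n d)"
      unfolding W_blocks by (rule block_column_cong)
    then have "W = 0\<^sub>m (k*n) d" by (simp add: block_column_zero)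
    then show False using W(2) by simp
  qed
  moreover have "A \<in> carrier_mat n d" using B by (simp add: A_def)
  ultimately show ?thesis using that by blast
qed

lemma fourier_nonzero_irr_component:
  assumes "irr_component G (k*n) induced_rep d \<xi>"
  shows "fourier S n f d \<xi> \<noteq> 0\<^sub>m (n*d) (n*d)"
proof -
  have \<xi>: "\<xi> g \<in> carrier_mat d d" "\<xi> g * mat_adjoint (\<xi> g) = 1\<^sub>m d" if "g \<in> carrier G" for g
    using irreducible_rep_irr_component[OF assms] that
    by (auto simp: irreducible_rep_def unitary_rep_def unitary_mat_def)
  obtain W where W: "W \<in> carrier_mat (k*n) d" "W \<noteq> 0\<^sub>m (k*n) d"
      "\<And>g. g \<in> carrier G \<Longrightarrow> induced_rep g * W = W * \<xi> g"
    using irr_component_intertwiner[OF assms induced_rep_carrier] by blast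
  obtain A where "A \<in> carrier_mat n d" "A \<noteq> 0\<^sub>m n d" "\<And>s. s \<in> S \<Longrightarrow> f s * A = A * \<xi> s"
    using induced_intertwiner_restrict[OF W(1,2) \<xi>(1) W(3)] by blast
  moreover have "finite S" "S \<noteq> {}"
    using finite_subset[OF subgroup.subset[OF subgroup_S] finite_carrier]
      subgroup.one_closed[OF subgroup_S] by auto
  ultimately show ?thesis
    using \<xi> subgroup_mem_carrier by (intro fourier_nonzero_of_intertwiner) auto
qed

lemma rho_norm_induced_defect_le:
  assumes "\<rho> \<in> carrier_mat n n" "g \<in> carrier G"
  shows "(rho_norm \<rho> (induced_isometry * f g - induced_rep g * induced_isometry))\<^sup>2 \<le>
    1 / card (carrier G) * (\<Sum>h\<in>carrier G. (rho_norm \<rho> (f h * f g - f (h \<otimes> g)))\<^sup>2)"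
  using rho_norm_induced_defect_power2_le[OF assms] average_hom_defect_over_reps[OF assms(2)]
  by (simp add: hom_defect_def)

end

theorem theorem4p1:
  fixes G (structure) and n :: nat and \<rho> :: "complex mat" and \<epsilon> :: real
    and f :: "'g \<Rightarrow> complex mat" and S :: "'g set"
  assumes "group G" and "finite (carrier G)"
    and "is_state n \<rho>" and "\<epsilon> \<ge> 0"
    and "approx_hom G n \<rho> \<epsilon> f"
    and "subgroup S G"
    and "\<forall>s \<in> S. \<forall>g \<in> carrier G. f (s \<otimes> g) = f s * f g"
  shows "unitary_rep (G\<lparr>carrier := S\<rparr>) n f \<and>
    (\<exists>(m :: nat) V (\<phi> :: 'g \<Rightarrow> complex mat).
       isometry_mat m n V \<and> unitary_rep G m \<phi> \<and>
       (\<forall>g \<in> carrier G. (rho_norm \<rho> (V * f g - \<phi> g * V))\<^sup>2 \<le> \<epsilon>) \<and>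
       (\<forall>d \<xi>. irr_component G m \<phi> d \<xi> \<longrightarrow> fourier S n f d \<xi> \<noteq> 0\<^sub>m (n * d) (n * d)))"
proof -
  interpret group G by fact
  have unitary: "\<And>g. g \<in> carrier G \<Longrightarrow> unitary_mat n (f g)"
    and avg: "\<And>g. g \<in> carrier G \<Longrightarrow> 1 / card (carrier G) *
      (\<Sum>h\<in>carrier G. (rho_norm \<rho> (f h * f g - f (h \<otimes> g)))\<^sup>2) \<le> \<epsilon>"
    using assms(5) by (simp_all add: approx_hom_def)
  obtain k e where "coset_enumeration G S k e"
    using ex_coset_enumeration assms(2,6) by blast
  then interpret induced_setting G S k e n f
    using unitary assms(7) by (intro induced_setting.intro induced_setting_axioms.intro) auto
  have \<rho>: "\<rho> \<in> carrier_mat n n" using assms(3) by (simp add: is_state_def)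
  have "unitary_rep (G\<lparr>carrier := S\<rparr>) n f"
    using unitary assms(7) subgroup_mem_carrier by (simp add: unitary_rep_def)
  moreover have "(rho_norm \<rho> (induced_isometry * f g - induced_rep g * induced_isometry))\<^sup>2 \<le> \<epsilon>"
    if "g \<in> carrier G" for g
    using rho_norm_induced_defect_le[OF \<rho> that] avg[OF that] by linarith
  ultimately show ?thesis
    using isometry_induced_isometry unitary_rep_induced_rep fourier_nonzero_irr_component
    by (intro conjI exI[of _ "k*n"] exI[of _ induced_isometry] exI[of _ induced_rep]) auto
qed

end
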